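(* Let $S = Z(w^2 - F_{10}(x,y,z)) \subset \mathbb{P}(1,1,2,5)$ (weights $1,1,2,5$ for $x,y,z,w$, $F_{10}$ weighted homogeneous of degree $10$) be a surface with at worst canonical singularities. Let $G \leq \mathrm{Aut}(S)$ be the subgroup generated by those automorphisms whose associated matrix in $GL(2,\mathbb{C})$ is a scalar matrix. Then $|G| \leq 10$.
   Context: Every automorphism of $S$ extends to $\mathbb{P}(1,1,2,5)$ and has a unique lift to a graded automorphism of $\mathbb{C}[x,y,z,w]$ of the form $w\mapsto w$, $z\mapsto z$, $x\mapsto ax+cy$, $y \mapsto bx+dy$; the associated matrix is $A=\begin{pmatrix} a&b\\ c&d\end{pmatrix}$. *)

theory Defs
  imports Complex_Main
begin

text \<open>A weighted homogeneous polynomial F10(x,y,z) of degree 10 (weights 1,1,2) is given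
  by its coefficient function: c i j k is the coefficient of x^i y^j z^k.\<close>

definition wdeg10 :: "(nat \<Rightarrow> nat \<Rightarrow> nat \<Rightarrow> complex) \<Rightarrow> bool" where
  "wdeg10 c \<longleftrightarrow> (\<forall>i j k. c i j k \<noteq> 0 \<longrightarrow> i + j + 2 * k = 10)"

definition evF :: "(nat \<Rightarrow> nat \<Rightarrow> nat \<Rightarrow> complex) \<Rightarrow> complex \<Rightarrow> complex \<Rightarrow> complex \<Rightarrow> complex" where
  "evF c x y z = (\<Sum>i\<le>10. \<Sum>j\<le>10. \<Sum>k\<le>10. c i j k * x ^ i * y ^ j * z ^ k)"

definition dxF :: "(nat \<Rightarrow> nat \<Rightarrow> nat \<Rightarrow> complex) \<Rightarrow> complex \<Rightarrow> complex \<Rightarrow> complex \<Rightarrow> complex" where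
  "dxF c x y z = (\<Sum>i\<le>10. \<Sum>j\<le>10. \<Sum>k\<le>10. of_nat i * c i j k * x ^ (i - 1) * y ^ j * z ^ k)"

definition dyF :: "(nat \<Rightarrow> nat \<Rightarrow> nat \<Rightarrow> complex) \<Rightarrow> complex \<Rightarrow> complex \<Rightarrow> complex \<Rightarrow> complex" where
  "dyF c x y z = (\<Sum>i\<le>10. \<Sum>j\<le>10. \<Sum>k\<le>10. of_nat j * c i j k * x ^ i * y ^ (j - 1) * z ^ k)"

definition dzF :: "(nat \<Rightarrow> nat \<Rightarrow> nat \<Rightarrow> complex) \<Rightarrow> complex \<Rightarrow> complex \<Rightarrow> complex \<Rightarrow> complex" where
  "dzF c x y z = (\<Sum>i\<le>10. \<Sum>j\<le>10. \<Sum>k\<le>10. of_nat k * c i j k * x ^ i * y ^ j * z ^ (k - 1))"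

definition cone_pt :: "(nat \<Rightarrow> nat \<Rightarrow> nat \<Rightarrow> complex) \<Rightarrow> complex \<times> complex \<times> complex \<times> complex \<Rightarrow> bool" where
  "cone_pt c p = (case p of (x, y, z, w) \<Rightarrow> p \<noteq> (0, 0, 0, 0) \<and> w ^ 2 = evF c x y z)"

definition cone_sing :: "(nat \<Rightarrow> nat \<Rightarrow> nat \<Rightarrow> complex) \<Rightarrow> complex \<times> complex \<times> complex \<times> complex \<Rightarrow> bool" where
  "cone_sing c p = (case p of (x, y, z, w) \<Rightarrow> cone_pt c p \<and>
      dxF c x y z = 0 \<and> dyF c x y z = 0 \<and> dzF c x y z = 0 \<and> 2 * w = 0)"

definition wact :: "complex \<Rightarrow> complex \<times> complex \<times> complex \<times> complex \<Rightarrow> complex \<times> complex \<times> complex \<times> complex" where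
  "wact t p = (case p of (x, y, z, w) \<Rightarrow> (t * x, t * y, t ^ 2 * z, t ^ 5 * w))"

text \<open>Surrogate for "at worst canonical singularities":
  only finitely many points of S in P(1,1,2,5) at which the affine cone is singular.\<close>
definition finitely_many_cone_sing :: "(nat \<Rightarrow> nat \<Rightarrow> nat \<Rightarrow> complex) \<Rightarrow> bool" where
  "finitely_many_cone_sing c \<longleftrightarrow>
     (\<exists>P. finite P \<and> (\<forall>p. cone_sing c p \<longrightarrow> (\<exists>t q. t \<noteq> 0 \<and> q \<in> P \<and> p = wact t q)))"

text \<open>Scalars a such that the graded automorphism x\<mapsto>ax, y\<mapsto>ay, z\<mapsto>z, w\<mapsto>w of C[x,y,z,w]
  preserves S (i.e. its affine cone); these are exactly the unique lifts of the
  automorphisms of S with scalar associated matrix a*I.\<close>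
definition scalar_lifts :: "(nat \<Rightarrow> nat \<Rightarrow> nat \<Rightarrow> complex) \<Rightarrow> complex set" where
  "scalar_lifts c = {a. a \<noteq> 0 \<and> (\<forall>x y z w.
      cone_pt c (x, y, z, w) \<longleftrightarrow> cone_pt c (a * x, a * y, z, w))}"

inductive_set gen_group :: "complex set \<Rightarrow> complex set" for A where
  one: "1 \<in> gen_group A"
| gen: "a \<in> A \<Longrightarrow> a \<in> gen_group A"
| mult: "a \<in> gen_group A \<Longrightarrow> b \<in> gen_group A \<Longrightarrow> a * b \<in> gen_group A"
| inv: "a \<in> gen_group A \<Longrightarrow> inverse a \<in> gen_group A"

end

theory Submission
  imports Defs
begin

text \<open>A scalar lift \<open>a\<close> fixes \<open>F\<^sub>1\<^sub>0\<close>, so \<open>a\<^bsup>i+j\<^esup> = 1\<close> for every monomial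
  \<open>x\<^sup>iy\<^sup>jz\<^sup>k\<close> occurring in \<open>F\<^sub>1\<^sub>0\<close>. Some such monomial has \<open>0 < i + j \<le> 10\<close>: otherwise
  \<open>F\<^sub>1\<^sub>0\<close> is a multiple of \<open>z\<^sup>5\<close> and \<open>S\<close> is singular along the whole line \<open>z = w = 0\<close>.
  Hence all scalar lifts, and the group they generate, lie in the group of
  \<open>(i+j)\<close>-th roots of unity.\<close>

lemma polyfun3_eq_0:
  fixes f :: "nat \<Rightarrow> nat \<Rightarrow> nat \<Rightarrow> 'a::{idom,real_normed_div_algebra}"
  assumes zero: "\<And>x y z. (\<Sum>i\<le>n. \<Sum>j\<le>n. \<Sum>k\<le>n. f i j k * x ^ i * y ^ j * z ^ k) = 0"
    and "i \<le> n" "j \<le> n" "k \<le> n"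
  shows "f i j k = 0"
proof -
  have "\<forall>x. (\<Sum>i\<le>n. (\<Sum>j\<le>n. (\<Sum>k\<le>n. f i j k * z ^ k) * y ^ j) * x ^ i) = 0" for y z
    using zero unfolding sum_distrib_right by (simp add: mult_ac)
  then have "\<forall>y. (\<Sum>j\<le>n. (\<Sum>k\<le>n. f i j k * z ^ k) * y ^ j) = 0" for z
    using \<open>i \<le> n\<close> by (simp add: polyfun_eq_0)
  then have "\<forall>z. (\<Sum>k\<le>n. f i j k * z ^ k) = 0"
    using \<open>j \<le> n\<close> by (simp add: polyfun_eq_0)
  then show ?thesis
    using \<open>k \<le> n\<close> by (simp add: polyfun_eq_0)
qed

lemma evF_scalar_lift:
  assumes "a \<in> scalar_lifts c"
  shows "evF c (a * x) (a * y) z = evF c x y z"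
proof (cases "x = 0 \<and> y = 0 \<and> z = 0")
  case True
  then show ?thesis by simp
next
  case False
  obtain w where w: "w ^ 2 = evF c x y z"
    using power2_csqrt by blast
  then have "cone_pt c (x, y, z, w)"
    using False by (auto simp: cone_pt_def)
  then have "cone_pt c (a * x, a * y, z, w)"
    using assms by (auto simp: scalar_lifts_def)
  with w show ?thesis
    by (simp add: cone_pt_def)
qed

lemma scalar_lift_power_eq_1:
  assumes "a \<in> scalar_lifts c" "c i j k \<noteq> 0" "i \<le> 10" "j \<le> 10" "k \<le> 10"
  shows "a ^ (i + j) = 1"
proof -
  have "(\<Sum>i\<le>10. \<Sum>j\<le>10. \<Sum>k\<le>10. c i j k * (a ^ (i + j) - 1) * x ^ i * y ^ j * z ^ k) = 0"
    for x y z
  proof -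
    have "(\<Sum>i\<le>10. \<Sum>j\<le>10. \<Sum>k\<le>10. c i j k * (a ^ (i + j) - 1) * x ^ i * y ^ j * z ^ k) =
        evF c (a * x) (a * y) z - evF c x y z"
      unfolding evF_def sum_subtractf[symmetric]
      by (simp add: power_add algebra_simps)
    also have "\<dots> = 0"
      by (simp add: evF_scalar_lift[OF assms(1)])
    finally show ?thesis .
  qed
  then have "c i j k * (a ^ (i + j) - 1) = 0"
    by (rule polyfun3_eq_0[where f = "\<lambda>i j k. c i j k * (a ^ (i + j) - 1)"]) (use assms in auto)
  with assms(2) show ?thesis by simp
qed

lemma cone_sing_if_pure_z_power:
  assumes "wdeg10 c" "\<And>i j k. c i j k \<noteq> 0 \<Longrightarrow> i + j = 0"
  shows "cone_sing c (x, 1, 0, 0)"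
proof -
  have only_z5: "c i j k \<noteq> 0 \<Longrightarrow> i = 0 \<and> j = 0 \<and> k = 5" for i j k
    using assms unfolding wdeg10_def by fastforce
  have summand_zero:
    "c i j k * x ^ i * 1 ^ j * 0 ^ k = 0"
    "of_nat i * c i j k * x ^ (i - 1) * 1 ^ j * 0 ^ k = 0"
    "of_nat j * c i j k * x ^ i * 1 ^ (j - 1) * 0 ^ k = 0"
    "of_nat k * c i j k * x ^ i * 1 ^ j * 0 ^ (k - 1) = 0" for i j k
    using only_z5[of i j k] by (cases "c i j k = 0"; simp)+
  have "evF c x 1 0 = 0" "dxF c x 1 0 = 0" "dyF c x 1 0 = 0" "dzF c x 1 0 = 0"
    unfolding evF_def dxF_def dyF_def dzF_def
    by (intro sum.neutral ballI; rule summand_zero)+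
  then show ?thesis
    by (simp add: cone_sing_def cone_pt_def)
qed

text \<open>The points \<open>(x : 1 : 0 : 0)\<close> are pairwise distinct in \<open>\<P>(1,1,2,5)\<close>,
  as \<open>x\<close> is recovered from any point of the orbit as the ratio of its first two coordinates.\<close>

lemma finitely_many_cone_sing_ex_regular:
  assumes "finitely_many_cone_sing c"
  shows "\<exists>x. \<not> cone_sing c (x, 1, 0, 0)"
proof (rule ccontr)
  assume "\<not> ?thesis"
  then have sing: "cone_sing c (x, 1, 0, 0)" for x
    by blast
  obtain P where "finite P"
    and P: "\<And>p. cone_sing c p \<Longrightarrow> \<exists>t q. t \<noteq> 0 \<and> q \<in> P \<and> p = wact t q"
    using assms unfolding finitely_many_cone_sing_def by blast
  have "x \<in> (\<lambda>q. fst q / fst (snd q)) ` P" for x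
  proof -
    obtain t q where "q \<in> P" "(x, 1, 0, 0) = wact t q"
      using P[OF sing] by blast
    moreover obtain q1 q2 q3 q4 where q: "q = (q1, q2, q3, q4)"
      by (cases q)
    ultimately have "x = t * q1" "1 = t * q2"
      by (simp_all add: wact_def)
    then have "x = fst q / fst (snd q)"
      unfolding q by (metis mult.commute nonzero_eq_divide_eq mult_zero_right
          mult.left_commute mult_1_right fst_conv snd_conv)
    with \<open>q \<in> P\<close> show ?thesis by blast
  qed
  then have "UNIV \<subseteq> (\<lambda>q. fst q / fst (snd q)) ` P"
    by blast
  then have "finite (UNIV :: complex set)"
    using \<open>finite P\<close> finite_subset by blast
  then show False
    using infinite_UNIV_char_0 by blast
qed

lemma wdeg10_finitely_many_cone_sing_xy_monomial:
  assumes "wdeg10 c" "finitely_many_cone_sing c"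
  obtains i j k where "c i j k \<noteq> 0" "0 < i + j" "i + j + 2 * k = 10"
proof -
  obtain i j k where "c i j k \<noteq> 0" "0 < i + j"
    using cone_sing_if_pure_z_power[OF assms(1)] finitely_many_cone_sing_ex_regular[OF assms(2)]
    by blast
  moreover from \<open>c i j k \<noteq> 0\<close> have "i + j + 2 * k = 10"
    using assms(1) unfolding wdeg10_def by blast
  ultimately show thesis
    by (rule that)
qed

lemma gen_group_subset_roots_unity:
  assumes "\<And>a. a \<in> A \<Longrightarrow> a ^ n = 1"
  shows "gen_group A \<subseteq> {z. z ^ n = 1}"
proof
  fix a
  assume "a \<in> gen_group A"
  then show "a \<in> {z. z ^ n = 1}"
    by (induction rule: gen_group.induct) (auto simp: assms power_mult_distrib power_inverse)
qed

theorem corollary2p9: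
  fixes c :: "nat \<Rightarrow> nat \<Rightarrow> nat \<Rightarrow> complex"
  assumes "wdeg10 c"
    and "finitely_many_cone_sing c"
  shows "finite (gen_group (scalar_lifts c)) \<and> card (gen_group (scalar_lifts c)) \<le> 10"
proof -
  obtain i j k where ijk: "c i j k \<noteq> 0" "0 < i + j" "i + j + 2 * k = 10"
    using wdeg10_finitely_many_cone_sing_xy_monomial[OF assms] .
  define roots where "roots = {z::complex. z ^ (i + j) = 1}"
  have sub: "gen_group (scalar_lifts c) \<subseteq> roots"
    unfolding roots_def
  proof (rule gen_group_subset_roots_unity)
    show "a ^ (i + j) = 1" if "a \<in> scalar_lifts c" for a
      using scalar_lift_power_eq_1[OF that ijk(1)] ijk(3) by simp
  qed
  have fin: "finite roots"
    unfolding roots_def using ijk(2) by (intro finite_roots_unity) linarith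
  have "card roots = i + j"
    unfolding roots_def using ijk(2) by (rule card_roots_unity_eq)
  then have "card (gen_group (scalar_lifts c)) \<le> i + j"
    using card_mono[OF fin sub] by simp
  then show ?thesis
    using finite_subset[OF sub fin] ijk(3) by simp
qed

end
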